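(* For $i = 0,\dots,2^n-1$, the row $i$ word $m_i(n)$ in the matrix $M_n$ (the $i$-th Gray code word of length $n$) is equal to $\lambda_0([i]_2^R)^R$, where $R$ denotes word reversal and $[i]_2$ is the length $n$ binary representation of $i$ with the least significant digit first (including leading zeros, if necessary).
   Context: Let $X_2=\{0,1\}$. Define matrices $M_n$ of size $2^n \times n$ with entries in $X_2$ recursively by \[ M_1 = \begin{bmatrix} 0 \\ 1 \end{bmatrix}, \qquad M_{n+1} = \begin{bmatrix} M_n & 0_n \\ M_n^R & 1_n \end{bmatrix}, \] where $M_n^R$ is obtained from $M_n$ by reversing the order of its rows, and $0_n$, $1_n$ are column vectors with $2^n$ entries all equal to $0$, $1$ respectively; rows are indexed from $0$. The binary tree automorphisms $\lambda_0,\lambda_1$ (the states of the transducer generating the lamplighter group) are defined recursively by $\lambda_0(0w)=0\,\lambda_0(w)$, $\lambda_0(1w)=1\,\lambda_1(w)$, $\lambda_1(0w)=1\,\lambda_0(w)$, $\lambda_1(1w)=0\,\lambda_1(w)$, and $\lambda_0(\emptyset)=\lambda_1(\emptyset)=\emptyset$. *)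

theory Defs
  imports Main
begin

text \<open>Letters of X_2 = {0,1} are represented by the naturals 0 and 1; words are lists,
  written left to right (first letter = head of the list).\<close>

text \<open>The matrix M_n, as the list of its 2^n rows (row i = nth (M n) i), each row a word of length n.
  M 0 is not used (the paper starts at n = 1).\<close>
fun M :: "nat \<Rightarrow> nat list list" where
  "M 0 = []"
| "M (Suc 0) = [[0], [1]]"
| "M (Suc (Suc n)) =
     map (\<lambda>r. r @ [0]) (M (Suc n)) @ map (\<lambda>r. r @ [1]) (rev (M (Suc n)))"

fun lam0 :: "nat list \<Rightarrow> nat list" and lam1 :: "nat list \<Rightarrow> nat list" where
  "lam0 [] = []"
| "lam0 (0 # w) = 0 # lam0 w"
| "lam0 (Suc 0 # w) = 1 # lam1 w"
| "lam1 [] = []"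
| "lam1 (0 # w) = 1 # lam0 w"
| "lam1 (Suc 0 # w) = 0 # lam1 w"

definition bin_lsb :: "nat \<Rightarrow> nat \<Rightarrow> nat list" where
  "bin_lsb n i = map (\<lambda>k. i div 2 ^ k mod 2) [0..<n]"

end

theory Submission
  imports Defs
begin

text \<open>Read with its most significant digit first, the length-(n+1) word of i starts with its
  top digit. On a leading 0 the transducer stays in state \<open>\<lambda>\<^sub>0\<close>; on a leading 1 it moves to
  \<open>\<lambda>\<^sub>1\<close>, which is \<open>\<lambda>\<^sub>0\<close> after complementing every letter, and complementing the low n digits of
  i turns them into those of the mirror index 2^(n+1) - 1 - i. So after reversal the words
  obey the same reflect-and-append recursion as the rows of M.\<close>

definition flip :: "nat list \<Rightarrow> nat list" where
  "flip w = map (\<lambda>b. 1 - b) w"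

lemma rev_flip: "rev (flip w) = flip (rev w)"
  by (simp add: flip_def rev_map)

lemma lam0_lam1_flip:
  assumes "set w \<subseteq> {0, 1}"
  shows "lam0 w = lam1 (flip w) \<and> lam1 w = lam0 (flip w)"
  using assms by (induction w) (auto simp: flip_def)

lemma bin_lsb_Suc: "bin_lsb (Suc n) i = i mod 2 # bin_lsb n (i div 2)"
  unfolding bin_lsb_def
  by (simp add: map_upt_Suc div_mult2_eq del: upt_Suc)

lemma bin_lsb_Suc_2_mult_plus: "b < 2 \<Longrightarrow> bin_lsb (Suc n) (2 * a + b) = b # bin_lsb n a"
  by (simp add: bin_lsb_Suc)

lemma rev_bin_lsb_Suc: "rev (bin_lsb (Suc n) i) = i div 2 ^ n mod 2 # rev (bin_lsb n i)"
  unfolding bin_lsb_def by simp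

lemma set_bin_lsb: "set (bin_lsb n i) \<subseteq> {0, 1}"
  unfolding bin_lsb_def by auto

lemma complement_halves:
  fixes i N :: nat
  assumes "i < 2 * N"
  shows "2 * N - 1 - i = 2 * (N - 1 - i div 2) + (1 - i mod 2)"
  using assms div_mult_mod_eq[of i 2] mod_less_divisor[of 2 i] by linarith

lemma bin_lsb_complement:
  assumes "n \<le> m" and "i < 2 ^ m"
  shows "bin_lsb n (2 ^ m - 1 - i) = flip (bin_lsb n i)"
  using assms
proof (induction n arbitrary: m i)
  case 0
  then show ?case by (simp add: bin_lsb_def flip_def)
next
  case (Suc n)
  then obtain m' where m: "m = Suc m'" and "n \<le> m'"
    by (metis Suc_le_D Suc_le_mono)
  have halves: "2 ^ m - 1 - i = 2 * (2 ^ m' - 1 - i div 2) + (1 - i mod 2)"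
    using complement_halves[of i "2 ^ m'"] Suc.prems m by simp
  have "bin_lsb (Suc n) (2 ^ m - 1 - i) = (1 - i mod 2) # bin_lsb n (2 ^ m' - 1 - i div 2)"
    unfolding halves by (rule bin_lsb_Suc_2_mult_plus) simp
  also have "\<dots> = (1 - i mod 2) # flip (bin_lsb n (i div 2))"
    using Suc.IH[OF \<open>n \<le> m'\<close>] Suc.prems m by simp
  also have "\<dots> = flip (bin_lsb (Suc n) i)"
    by (simp add: bin_lsb_Suc flip_def)
  finally show ?case .
qed

lemma lam0_rev_bin_lsb_Suc_low:
  "i < 2 ^ n \<Longrightarrow> lam0 (rev (bin_lsb (Suc n) i)) = 0 # lam0 (rev (bin_lsb n i))"
  by (simp add: rev_bin_lsb_Suc)

lemma lam0_rev_bin_lsb_Suc_high: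
  assumes "2 ^ n \<le> i" and "i < 2 ^ Suc n"
  shows "lam0 (rev (bin_lsb (Suc n) i)) = 1 # lam0 (rev (bin_lsb n (2 ^ Suc n - 1 - i)))"
proof -
  have "i div 2 ^ n = 1"
    using assms by (intro div_nat_eqI) simp_all
  then have "lam0 (rev (bin_lsb (Suc n) i)) = 1 # lam1 (rev (bin_lsb n i))"
    by (simp add: rev_bin_lsb_Suc)
  also have "lam1 (rev (bin_lsb n i)) = lam0 (flip (rev (bin_lsb n i)))"
    using lam0_lam1_flip set_bin_lsb by simp
  also have "flip (rev (bin_lsb n i)) = rev (bin_lsb n (2 ^ Suc n - 1 - i))"
    using bin_lsb_complement[of n "Suc n" i] assms by (simp add: rev_flip)
  finally show ?thesis .
qed

lemma length_M: "0 < n \<Longrightarrow> length (M n) = 2 ^ n"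
  by (induction n rule: M.induct) auto

lemma nth_M_Suc_low: "0 < n \<Longrightarrow> i < 2 ^ n \<Longrightarrow> M (Suc n) ! i = M n ! i @ [0]"
  by (cases n) (simp_all add: nth_append length_M)

lemma nth_M_Suc_high:
  assumes "0 < n" and "2 ^ n \<le> i" and "i < 2 ^ Suc n"
  shows "M (Suc n) ! i = M n ! (2 ^ Suc n - 1 - i) @ [1]"
proof -
  obtain k where n: "n = Suc k"
    using assms(1) gr0_implies_Suc by blast
  have "M (Suc n) ! i = rev (M n) ! (i - 2 ^ n) @ [1]"
    using assms by (simp add: n nth_append length_M)
  also have "rev (M n) ! (i - 2 ^ n) = M n ! (2 ^ Suc n - 1 - i)"
    using assms by (simp add: rev_nth length_M mult_2)
  finally show ?thesis .
qed

theorem mainTheorem11: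
  fixes n i :: nat
  assumes "n \<ge> 1" and "i < 2 ^ n"
  shows "M n ! i = rev (lam0 (rev (bin_lsb n i)))"
  using assms
proof (induction n arbitrary: i rule: nat_induct_at_least)
  case base
  then have "i = 0 \<or> i = 1"
    by auto
  then show ?case
    by (auto simp: bin_lsb_def)
next
  case (Suc n)
  show ?case
  proof (cases "i < 2 ^ n")
    case True
    then show ?thesis
      using Suc by (simp add: nth_M_Suc_low lam0_rev_bin_lsb_Suc_low)
  next
    case False
    then have "2 ^ Suc n - 1 - i < 2 ^ n"
      using Suc.prems by simp
    then show ?thesis
      using False Suc by (simp add: nth_M_Suc_high lam0_rev_bin_lsb_Suc_high)
  qed
qed

end
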